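(* Let $p\in(0,1)$ and consider the tree $T_\infty$. Let $\gamma_U:[0,1]\to[0,\infty)$ be a continuous function such that for every fixed $a\in[0,1]$ and every vertex $v$ of $T_\infty$ at depth $m$, $\Pr\left[\sum_{e\in\pi(v)}W_e>am\right]\le\exp(-m\gamma_U(a)+o(m))$ as $m\to\infty$. Define $$\theta=\sup\left\{\frac a\rho:\gamma_U(a)+\Upsilon(\rho)=\log2,\ a\in[0,1],\ \rho\in(0,\infty)\right\}.$$ Then for every fixed $\varepsilon>0$, $\Pr[\mathrm{wh}(T_t)>\theta(1+\varepsilon)t]\to0$ as $t\to\infty$.
   Context: $\mathrm{Geo}(p)$ has $\Pr[\mathrm{Geo}(p)=k]=(1-p)^kp$, $k\ge0$. $\Upsilon(x)=x-1-\log x$ for $0<x\le1$ and $\Upsilon(x)=0$ for $x>1$. $T_\infty$ is an infinite rooted binary tree: to each vertex an independent exponential random variable with mean $1$ is attached, and $E_e$ for each of the two edges from a vertex to its children equals that vertex's variable. Weights are generated top-down: the root has weight $W=0$; for a vertex $v$ with children $v_1,v_2$, choose $i\in\{1,2\}$ uniformly and an independent $Y=1-\mathrm{Geo}(p)$, set $W_{vv_i}=\max\{Y,1-W_v\}$, $W_{v_i}=W_v+W_{vv_i}$, $W_{vv_{3-i}}=0$, $W_{v_{3-i}}=W_v$. $\pi(v)$ is the set of edges of the path from the root to $v$; the birth time is $B_v=\sum_{e\in\pi(v)}E_e$, and $T_t$ is the subtree induced by vertices with $B_v\le t$. $\mathrm{wh}(T_t)$ is the maximum of $W_v$ over vertices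 $v$ of $T_t$. *)

theory Defs
  imports "HOL-Probability.Probability" "HOL-Library.Landau_Symbols"
begin

(* Vertices of the infinite rooted binary tree T_infinity are finite lists of
   booleans; the list is the path from the vertex back to the root, i.e. the
   children of v are  True # v  and  False # v,  and [] is the root.  An edge is identified with its lower endpoint
   (the child), so the edges of the path pi(v) are the nonempty suffixes
   drop k v, k < length v. *)

type_synonym vertex = "bool list"

(* Per-vertex randomness: (exponential variable of the vertex, choice of the
   child i (True = child True # v), geometric variable Geo(p) giving Y = 1 - Geo). *)
type_synonym sample = "vertex \<Rightarrow> real \<times> bool \<times> nat"

definition vertex_dist :: "real \<Rightarrow> (real \<times> bool \<times> nat) measure" where
  "vertex_dist p = density lborel (exponential_density 1)
      \<Otimes>\<^sub>M (measure_pmf (bernoulli_pmf (1/2)) \<Otimes>\<^sub>M measure_pmf (geometric_pmf p))"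

definition tree_space :: "real \<Rightarrow> sample measure" where
  "tree_space p = (\<Pi>\<^sub>M v\<in>UNIV. vertex_dist p)"

definition Evar :: "sample \<Rightarrow> vertex \<Rightarrow> real" where
  "Evar \<omega> v = fst (\<omega> v)"
definition Choice :: "sample \<Rightarrow> vertex \<Rightarrow> bool" where
  "Choice \<omega> v = fst (snd (\<omega> v))"
definition Yvar :: "sample \<Rightarrow> vertex \<Rightarrow> real" where
  "Yvar \<omega> v = 1 - real (snd (snd (\<omega> v)))"

fun Wv :: "sample \<Rightarrow> vertex \<Rightarrow> real" where
  "Wv \<omega> [] = 0"
| "Wv \<omega> (b # v) = Wv \<omega> v +
      (if b = Choice \<omega> v then max (Yvar \<omega> v) (1 - Wv \<omega> v) else 0)"

fun We :: "sample \<Rightarrow> vertex \<Rightarrow> real" where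
  "We \<omega> [] = 0"
| "We \<omega> (b # v) = (if b = Choice \<omega> v then max (Yvar \<omega> v) (1 - Wv \<omega> v) else 0)"

(* E_e of the edge ending in u equals the variable of the parent of u *)
definition Ee :: "sample \<Rightarrow> vertex \<Rightarrow> real" where
  "Ee \<omega> u = Evar \<omega> (tl u)"

definition path_weight :: "sample \<Rightarrow> vertex \<Rightarrow> real" where
  "path_weight \<omega> v = (\<Sum>k<length v. We \<omega> (drop k v))"

definition birth :: "sample \<Rightarrow> vertex \<Rightarrow> real" where
  "birth \<omega> v = (\<Sum>k<length v. Ee \<omega> (drop k v))"

definition wh :: "sample \<Rightarrow> real \<Rightarrow> ereal" where
  "wh \<omega> t = (SUP v\<in>{v. birth \<omega> v \<le> t}. ereal (Wv \<omega> v))"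

definition Upsilon :: "real \<Rightarrow> real" where
  "Upsilon x = (if x \<le> 1 then x - 1 - ln x else 0)"

definition theta :: "(real \<Rightarrow> real) \<Rightarrow> real" where
  "theta \<gamma> = Sup {a / \<rho> | a \<rho>. \<gamma> a + Upsilon \<rho> = ln 2 \<and> a \<in> {0..1} \<and> 0 < \<rho>}"

end

theory Submission
  imports Defs
begin

text \<open>
  A vertex \<open>v\<close> of depth \<open>m\<close> has \<open>W\<^sub>v \<le> m\<close>, so \<open>wh(T\<^sub>t) > c t\<close> forces some vertex of depth
  \<open>m > c t\<close> to be born by time \<open>t\<close> with \<open>W\<^sub>v > c t\<close>. Birth times are built from the exponential
  variables and weights from the remaining ones, so the two events are independent; a Chernoff
  bound gives \<open>P[B\<^sub>v \<le> t] \<le> exp(-m \<Upsilon>(t/m))\<close> and the hypothesis gives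
  \<open>P[W\<^sub>v > c t] \<le> exp(-m \<gamma>(c t/m) + o(m))\<close>, uniformly in \<open>a\<close> by continuity of \<open>\<gamma>\<close>.
  For \<open>c > \<theta>\<close>, compactness gives \<open>\<gamma>(c \<rho>) + \<Upsilon>(\<rho>) \<ge> log 2 + \<delta>\<close>, so the \<open>2\<^sup>m\<close> vertices of
  depth \<open>m\<close> contribute \<open>exp(-\<Omega>(m))\<close> and the sum over \<open>m > c t\<close> tends to zero.
  Such a \<open>c = \<theta>(1 + \<epsilon>)\<close> exists because \<open>\<theta> > 0\<close>: the child of the root chosen first gives
  \<open>P[W\<^sub>v > 0] \<ge> 1/2\<close> along a path, which forces \<open>\<gamma>(0) < log 2\<close>.
  The law of \<open>Y\<close> never enters.
\<close>

lemma Wv_nonneg: "0 \<le> Wv \<omega> v"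
proof (induction v)
  case (Cons b v)
  have "1 - Wv \<omega> v \<le> max (Yvar \<omega> v) (1 - Wv \<omega> v)" by simp
  then show ?case using Cons by auto
qed simp

lemma Wv_le_length: "Wv \<omega> v \<le> length v"
proof (induction v)
  case (Cons b v)
  have "Yvar \<omega> v \<le> 1" by (simp add: Yvar_def)
  with Cons Wv_nonneg[of \<omega> v] show ?case by (auto simp: max_def)
qed simp

lemma path_weight_Cons: "path_weight \<omega> (b # v) = We \<omega> (b # v) + path_weight \<omega> v"
  unfolding path_weight_def by (simp add: lessThan_Suc_eq_insert_0 sum.reindex)

lemma path_weight_eq_Wv: "path_weight \<omega> v = Wv \<omega> v"
  by (induction v) (simp_all add: path_weight_Cons, simp add: path_weight_def)

definition ancestors :: "vertex \<Rightarrow> vertex set" where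
  "ancestors v = (\<lambda>k. drop (Suc k) v) ` {..<length v}"

lemma ancestors_Nil [simp]: "ancestors [] = {}"
  by (simp add: ancestors_def)

lemma ancestors_Cons [simp]: "ancestors (b # v) = insert v (ancestors v)"
  by (simp add: ancestors_def lessThan_Suc_eq_insert_0 image_image)

lemma length_less_if_ancestor: "u \<in> ancestors v \<Longrightarrow> length u < length v"
  by (auto simp: ancestors_def)

lemma not_ancestor_self [simp]: "v \<notin> ancestors v"
  using length_less_if_ancestor by blast

lemma finite_ancestors [simp]: "finite (ancestors v)"
  by (simp add: ancestors_def)

lemma card_ancestors: "card (ancestors v) = length v"
  by (induction v) simp_all

lemma birth_Cons: "birth \<omega> (b # v) = Evar \<omega> v + birth \<omega> v"
  unfolding birth_def by (simp add: lessThan_Suc_eq_insert_0 sum.reindex Ee_def)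

lemma birth_eq_sum_ancestors: "birth \<omega> v = (\<Sum>u\<in>ancestors v. Evar \<omega> u)"
  by (induction v) (simp_all add: birth_Cons, simp add: birth_def)

lemma Wv_cong:
  "(\<And>u. u \<in> ancestors v \<Longrightarrow> snd (\<omega> u) = snd (\<omega>' u)) \<Longrightarrow> Wv \<omega> v = Wv \<omega>' v"
  by (induction v) (simp_all add: Choice_def Yvar_def)

lemma measurable_vertex_components [measurable]:
  "(\<lambda>x::real\<times>bool\<times>nat. fst x) \<in> borel_measurable (vertex_dist p)"
  "(\<lambda>x::real\<times>bool\<times>nat. fst (snd x)) \<in> measurable (vertex_dist p) (count_space UNIV)"
  "(\<lambda>x::real\<times>bool\<times>nat. snd (snd x)) \<in> measurable (vertex_dist p) (count_space UNIV)"
  unfolding vertex_dist_def by measurable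

lemma borel_measurable_Wv:
  "ancestors v \<subseteq> S \<Longrightarrow> (\<lambda>\<omega>. Wv \<omega> v) \<in> borel_measurable (PiM S (\<lambda>_. vertex_dist p))"
proof (induction v)
  case (Cons b v)
  then have "v \<in> S" and IH: "(\<lambda>\<omega>. Wv \<omega> v) \<in> borel_measurable (PiM S (\<lambda>_. vertex_dist p))"
    by auto
  then show ?case unfolding Wv.simps Choice_def Yvar_def by measurable
qed simp

lemma borel_measurable_birth:
  assumes "ancestors v \<subseteq> S"
  shows "(\<lambda>\<omega>. birth \<omega> v) \<in> borel_measurable (PiM S (\<lambda>_. vertex_dist p))"
proof -
  have "u \<in> S" if "u \<in> ancestors v" for u using assms that by blast
  then show ?thesis unfolding birth_eq_sum_ancestors Evar_def by measurable
qed

lemma borel_measurable_tree_space_Wv [measurable]: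
  "(\<lambda>\<omega>. Wv \<omega> v) \<in> borel_measurable (tree_space p)"
  unfolding tree_space_def by (rule borel_measurable_Wv) simp

lemma borel_measurable_tree_space_birth [measurable]:
  "(\<lambda>\<omega>. birth \<omega> v) \<in> borel_measurable (tree_space p)"
  unfolding tree_space_def by (rule borel_measurable_birth) simp

lemma prob_space_vertex_dist: "prob_space (vertex_dist p)"
  unfolding vertex_dist_def
  by (intro prob_space_pair prob_space_exponential_density prob_space_measure_pmf) auto

lemma space_vertex_dist [simp]: "space (vertex_dist p) = UNIV"
  by (simp add: vertex_dist_def space_pair_measure)

lemma product_prob_space_vertex_dist: "product_prob_space (\<lambda>_. vertex_dist p)"
  unfolding product_prob_space_def product_prob_space_axioms_def product_sigma_finite_def
  using prob_space_vertex_dist prob_space_imp_sigma_finite by blast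

lemma prob_space_tree_space: "prob_space (tree_space p)"
  unfolding tree_space_def by (rule prob_space_PiM) (rule prob_space_vertex_dist)

lemma space_tree_space [simp]: "space (tree_space p) = UNIV"
  by (simp add: tree_space_def space_PiM)

section \<open>Independence of birth times and weights\<close>

lemma nn_integral_tree_space_eq_PiM:
  fixes f :: "sample \<Rightarrow> ennreal"
  assumes "finite S" and "f \<in> borel_measurable (PiM S (\<lambda>_. vertex_dist p))"
    and "\<And>\<omega>. f (restrict \<omega> S) = f \<omega>"
  shows "(\<integral>\<^sup>+\<omega>. f \<omega> \<partial>tree_space p) = (\<integral>\<^sup>+\<omega>. f \<omega> \<partial>PiM S (\<lambda>_. vertex_dist p))"
proof -
  interpret product_prob_space "\<lambda>_. vertex_dist p" UNIV
    by (rule product_prob_space_vertex_dist)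
  have "(\<integral>\<^sup>+\<omega>. f \<omega> \<partial>PiM S (\<lambda>_. vertex_dist p)) =
        (\<integral>\<^sup>+\<omega>. f \<omega> \<partial>distr (PiM UNIV (\<lambda>_. vertex_dist p)) (PiM S (\<lambda>_. vertex_dist p)) (\<lambda>x. restrict x S))"
    using distr_PiM_restrict_finite[OF \<open>finite S\<close>] by simp
  also have "\<dots> = (\<integral>\<^sup>+\<omega>. f (restrict \<omega> S) \<partial>PiM UNIV (\<lambda>_. vertex_dist p))"
    by (rule nn_integral_distr) (simp_all add: assms(2) measurable_restrict_subset)
  finally show ?thesis by (simp add: assms(3) tree_space_def)
qed

lemma nn_integral_pair_measure_fst_mult_snd:
  assumes A: "prob_space A" and C: "prob_space C"
    and K1: "(\<lambda>y. K1 (fst y)) \<in> borel_measurable (A \<Otimes>\<^sub>M C)"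
    and K2: "(\<lambda>y. K2 (snd y)) \<in> borel_measurable (A \<Otimes>\<^sub>M C)"
  shows "(\<integral>\<^sup>+y. K1 (fst y) * K2 (snd y) \<partial>(A \<Otimes>\<^sub>M C)) =
         (\<integral>\<^sup>+y. K1 (fst y) \<partial>(A \<Otimes>\<^sub>M C)) * (\<integral>\<^sup>+y. K2 (snd y) \<partial>(A \<Otimes>\<^sub>M C))"
proof -
  interpret A: prob_space A by fact
  interpret C: prob_space C by fact
  obtain c0 where "c0 \<in> space C" using C.not_empty by blast
  then have "(\<lambda>a. (a, c0)) \<in> measurable A (A \<Otimes>\<^sub>M C)" by simp
  from measurable_compose[OF this K1] have mK1: "K1 \<in> borel_measurable A" by simp
  obtain a0 where "a0 \<in> space A" using A.not_empty by blast
  from measurable_compose_Pair1[OF this K2] have mK2: "K2 \<in> borel_measurable C" by simp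
  have "(\<integral>\<^sup>+y. K1 (fst y) * K2 (snd y) \<partial>(A \<Otimes>\<^sub>M C)) = (\<integral>\<^sup>+a. \<integral>\<^sup>+c. K1 a * K2 c \<partial>C \<partial>A)"
    using C.nn_integral_fst[OF borel_measurable_times_ennreal[OF K1 K2]] by simp
  also have "\<dots> = (\<integral>\<^sup>+a. K1 a \<partial>A) * (\<integral>\<^sup>+c. K2 c \<partial>C)"
    using mK1 mK2 by (simp add: nn_integral_cmult nn_integral_multc)
  also have "(\<integral>\<^sup>+a. K1 a \<partial>A) = (\<integral>\<^sup>+y. K1 (fst y) \<partial>(A \<Otimes>\<^sub>M C))"
    using C.nn_integral_fst[OF K1] by (simp add: C.emeasure_space_1)
  also have "(\<integral>\<^sup>+c. K2 c \<partial>C) = (\<integral>\<^sup>+y. K2 (snd y) \<partial>(A \<Otimes>\<^sub>M C))"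
    using C.nn_integral_fst[OF K2] by (simp add: A.emeasure_space_1)
  finally show ?thesis .
qed

lemma measurable_PiM_insert_update:
  "(\<lambda>(y, x). x(i := y)) \<in> measurable (M \<Otimes>\<^sub>M PiM S (\<lambda>_. M)) (PiM (insert i S) (\<lambda>_. M))"
  using measurable_compose[OF measurable_pair_swap' measurable_add_dim[of i S "\<lambda>_. M"]]
  by (simp add: case_prod_beta')

lemma nn_integral_PiM_pair_fst_mult_snd:
  assumes A: "prob_space A" and C: "prob_space C" and "finite S"
    and "(\<lambda>\<omega>. h1 (\<lambda>i. fst (\<omega> i))) \<in> borel_measurable (PiM S (\<lambda>_. A \<Otimes>\<^sub>M C))"
    and "(\<lambda>\<omega>. h2 (\<lambda>i. snd (\<omega> i))) \<in> borel_measurable (PiM S (\<lambda>_. A \<Otimes>\<^sub>M C))"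
  shows "(\<integral>\<^sup>+\<omega>. h1 (\<lambda>i. fst (\<omega> i)) * h2 (\<lambda>i. snd (\<omega> i)) \<partial>PiM S (\<lambda>_. A \<Otimes>\<^sub>M C)) =
     (\<integral>\<^sup>+\<omega>. h1 (\<lambda>i. fst (\<omega> i)) \<partial>PiM S (\<lambda>_. A \<Otimes>\<^sub>M C)) *
     (\<integral>\<^sup>+\<omega>. h2 (\<lambda>i. snd (\<omega> i)) \<partial>PiM S (\<lambda>_. A \<Otimes>\<^sub>M C))"
  using assms(3-5)
proof (induction S arbitrary: h1 h2 rule: finite_induct)
  case empty
  then show ?case by (simp add: PiM_empty nn_integral_count_space_finite)
next
  case (insert i S h1 h2)
  let ?N = "A \<Otimes>\<^sub>M C" and ?P = "PiM S (\<lambda>_. A \<Otimes>\<^sub>M C)"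
  interpret N: prob_space ?N by (intro prob_space_pair A C)
  interpret ps: product_sigma_finite "\<lambda>_. ?N"
    by (simp add: N.sigma_finite_measure_axioms product_sigma_finite_def)
  interpret pS: finite_product_sigma_finite "\<lambda>_. ?N" S
    by standard (use insert in auto)
  interpret pair_sigma_finite ?N ?P
    by (simp add: N.sigma_finite_measure_axioms pS.sigma_finite_measure_axioms pair_sigma_finite.intro)
  note m1 = insert.prems(1) and m2 = insert.prems(2)
  \<comment> \<open>integrate out coordinate i first; the remaining integrals over S factor by induction\<close>
  define K1 where "K1 a = (\<integral>\<^sup>+x. h1 ((\<lambda>j. fst (x j))(i := a)) \<partial>?P)" for a
  define K2 where "K2 c = (\<integral>\<^sup>+x. h2 ((\<lambda>j. snd (x j))(i := c)) \<partial>?P)" for c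
  have J1: "(\<lambda>(y, x). h1 ((\<lambda>j. fst (x j))(i := fst y))) \<in> borel_measurable (?N \<Otimes>\<^sub>M ?P)"
    using measurable_compose[OF measurable_PiM_insert_update m1] by (simp add: case_prod_beta' fun_upd_def if_distrib)
  have J2: "(\<lambda>(y, x). h2 ((\<lambda>j. snd (x j))(i := snd y))) \<in> borel_measurable (?N \<Otimes>\<^sub>M ?P)"
    using measurable_compose[OF measurable_PiM_insert_update m2] by (simp add: case_prod_beta' fun_upd_def if_distrib)
  have mK1: "(\<lambda>y. K1 (fst y)) \<in> borel_measurable ?N"
    unfolding K1_def using pS.borel_measurable_nn_integral_fst[OF J1] by (simp add: case_prod_beta')
  have mK2: "(\<lambda>y. K2 (snd y)) \<in> borel_measurable ?N"
    unfolding K2_def using pS.borel_measurable_nn_integral_fst[OF J2] by (simp add: case_prod_beta')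
  have "(\<integral>\<^sup>+\<omega>. h1 (\<lambda>i. fst (\<omega> i)) * h2 (\<lambda>i. snd (\<omega> i)) \<partial>PiM (insert i S) (\<lambda>_. ?N))
      = (\<integral>\<^sup>+y. \<integral>\<^sup>+x. h1 ((\<lambda>j. fst (x j))(i := fst y)) * h2 ((\<lambda>j. snd (x j))(i := snd y)) \<partial>?P \<partial>?N)"
    using borel_measurable_times_ennreal[OF m1 m2]
    by (subst ps.product_nn_integral_insert_rev[OF insert(1,2)]) (simp_all add: fun_upd_def if_distrib)
  also have "\<dots> = (\<integral>\<^sup>+y. K1 (fst y) * K2 (snd y) \<partial>?N)"
  proof (rule nn_integral_cong)
    fix y assume "y \<in> space ?N"
    then show "(\<integral>\<^sup>+x. h1 ((\<lambda>j. fst (x j))(i := fst y)) * h2 ((\<lambda>j. snd (x j))(i := snd y)) \<partial>?P) =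
        K1 (fst y) * K2 (snd y)"
      using insert.IH[of "\<lambda>e. h1 (e(i := fst y))" "\<lambda>e. h2 (e(i := snd y))"]
        measurable_compose_Pair1[OF _ J1] measurable_compose_Pair1[OF _ J2]
      by (simp add: K1_def K2_def)
  qed
  also have "\<dots> = (\<integral>\<^sup>+y. K1 (fst y) \<partial>?N) * (\<integral>\<^sup>+y. K2 (snd y) \<partial>?N)"
    using nn_integral_pair_measure_fst_mult_snd[OF A C mK1 mK2] .
  also have "(\<integral>\<^sup>+y. K1 (fst y) \<partial>?N) = (\<integral>\<^sup>+\<omega>. h1 (\<lambda>i. fst (\<omega> i)) \<partial>PiM (insert i S) (\<lambda>_. ?N))"
    unfolding K1_def by (subst ps.product_nn_integral_insert_rev[OF insert(1,2) m1]) (simp add: fun_upd_def if_distrib)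
  also have "(\<integral>\<^sup>+y. K2 (snd y) \<partial>?N) = (\<integral>\<^sup>+\<omega>. h2 (\<lambda>i. snd (\<omega> i)) \<partial>PiM (insert i S) (\<lambda>_. ?N))"
    unfolding K2_def by (subst ps.product_nn_integral_insert_rev[OF insert(1,2) m2]) (simp add: fun_upd_def if_distrib)
  finally show ?case .
qed


lemma emeasure_birth_le_Wv_gt:
  "emeasure (tree_space p) {\<omega>\<in>space (tree_space p). birth \<omega> v \<le> t \<and> Wv \<omega> v > x} =
   emeasure (tree_space p) {\<omega>\<in>space (tree_space p). birth \<omega> v \<le> t} *
   emeasure (tree_space p) {\<omega>\<in>space (tree_space p). Wv \<omega> v > x}"
proof -
  let ?P = "PiM (ancestors v) (\<lambda>_. vertex_dist p)"
  define h1 where "h1 e = (if (\<Sum>u\<in>ancestors v. e u) \<le> t then 1 else 0 :: ennreal)"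
    for e :: "vertex \<Rightarrow> real"
  \<comment> \<open>\<open>Wv\<close> reads only the second components, so the first ones can be filled arbitrarily\<close>
  define h2 where "h2 e = (if Wv (\<lambda>u. (0, e u)) v > x then 1 else 0 :: ennreal)"
    for e :: "vertex \<Rightarrow> bool \<times> nat"
  have h1_eq: "h1 (\<lambda>u. fst (\<omega> u)) = (if birth \<omega> v \<le> t then 1 else 0)" for \<omega>
    by (simp add: h1_def birth_eq_sum_ancestors Evar_def)
  have h2_eq: "h2 (\<lambda>u. snd (\<omega> u)) = (if Wv \<omega> v > x then 1 else 0)" for \<omega>
    using Wv_cong[of v "\<lambda>u. (0, snd (\<omega> u))" \<omega>] by (simp add: h2_def)
  have m1: "(\<lambda>\<omega>. h1 (\<lambda>u. fst (\<omega> u))) \<in> borel_measurable ?P"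
    unfolding h1_eq using borel_measurable_birth[OF subset_refl] by measurable
  have m2: "(\<lambda>\<omega>. h2 (\<lambda>u. snd (\<omega> u))) \<in> borel_measurable ?P"
    unfolding h2_eq using borel_measurable_Wv[OF subset_refl] by measurable
  have birth_restrict: "birth (restrict \<omega> (ancestors v)) v = birth \<omega> v" for \<omega>
    by (simp add: birth_eq_sum_ancestors Evar_def)
  have Wv_restrict: "Wv (restrict \<omega> (ancestors v)) v = Wv \<omega> v" for \<omega>
    by (rule Wv_cong) simp
  have emeasure_eq: "emeasure (tree_space p) {\<omega>\<in>space (tree_space p). P \<omega>} =
      (\<integral>\<^sup>+\<omega>. (if P \<omega> then 1 else 0) \<partial>tree_space p)"
    if "{\<omega>\<in>space (tree_space p). P \<omega>} \<in> sets (tree_space p)" for P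
    using nn_integral_indicator[OF that] by (simp add: indicator_def of_bool_def)
  have sets: "{\<omega>\<in>space (tree_space p). birth \<omega> v \<le> t} \<in> sets (tree_space p)"
    "{\<omega>\<in>space (tree_space p). Wv \<omega> v > x} \<in> sets (tree_space p)"
    "{\<omega>\<in>space (tree_space p). birth \<omega> v \<le> t \<and> Wv \<omega> v > x} \<in> sets (tree_space p)"
    by measurable
  have "emeasure (tree_space p) {\<omega>\<in>space (tree_space p). birth \<omega> v \<le> t \<and> Wv \<omega> v > x} =
      (\<integral>\<^sup>+\<omega>. h1 (\<lambda>u. fst (\<omega> u)) * h2 (\<lambda>u. snd (\<omega> u)) \<partial>tree_space p)"
    by (simp only: emeasure_eq[OF sets(3)] h1_eq h2_eq) (auto intro!: nn_integral_cong)
  also have "\<dots> = (\<integral>\<^sup>+\<omega>. h1 (\<lambda>u. fst (\<omega> u)) * h2 (\<lambda>u. snd (\<omega> u)) \<partial>?P)"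
    by (rule nn_integral_tree_space_eq_PiM)
      (simp, rule borel_measurable_times_ennreal[OF m1 m2], simp only: h1_eq h2_eq birth_restrict Wv_restrict)
  also have "\<dots> = (\<integral>\<^sup>+\<omega>. h1 (\<lambda>u. fst (\<omega> u)) \<partial>?P) * (\<integral>\<^sup>+\<omega>. h2 (\<lambda>u. snd (\<omega> u)) \<partial>?P)"
    using m1 m2 unfolding vertex_dist_def
    by (intro nn_integral_PiM_pair_fst_mult_snd prob_space_exponential_density prob_space_pair
        prob_space_measure_pmf) auto
  also have "(\<integral>\<^sup>+\<omega>. h1 (\<lambda>u. fst (\<omega> u)) \<partial>?P) = (\<integral>\<^sup>+\<omega>. h1 (\<lambda>u. fst (\<omega> u)) \<partial>tree_space p)"
    by (rule nn_integral_tree_space_eq_PiM[symmetric]) (simp, rule m1, simp only: h1_eq birth_restrict)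
  also have "(\<integral>\<^sup>+\<omega>. h2 (\<lambda>u. snd (\<omega> u)) \<partial>?P) = (\<integral>\<^sup>+\<omega>. h2 (\<lambda>u. snd (\<omega> u)) \<partial>tree_space p)"
    by (rule nn_integral_tree_space_eq_PiM[symmetric]) (simp, rule m2, simp only: h2_eq Wv_restrict)
  finally show ?thesis
    by (simp only: emeasure_eq[OF sets(1)] emeasure_eq[OF sets(2)] h1_eq h2_eq)
qed

section \<open>Chernoff bound for birth times\<close>

lemma nn_integral_exp_exponential_density:
  assumes "0 < l" and "0 \<le> s"
  shows "(\<integral>\<^sup>+a. ennreal (exp (- s * a)) \<partial>density lborel (exponential_density l)) =
    ennreal (l / (l + s))"
proof -
  have total: "(\<integral>\<^sup>+a. ennreal (exponential_density k a) \<partial>lborel) = 1" if "0 < k" for k :: real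
  proof -
    interpret prob_space "density lborel (exponential_density k)"
      using prob_space_exponential_density[OF that] .
    show ?thesis
      using emeasure_space_1 by (subst (asm) emeasure_density) (auto intro!: nn_integral_cong)
  qed
  have "(\<integral>\<^sup>+a. ennreal (exp (- s * a)) \<partial>density lborel (exponential_density l))
      = (\<integral>\<^sup>+a. ennreal (exponential_density l a) * ennreal (exp (- s * a)) \<partial>lborel)"
    by (rule nn_integral_density) auto
  also have "\<dots> = (\<integral>\<^sup>+a. ennreal (exponential_density (l + s) a) * ennreal (l / (l + s)) \<partial>lborel)"
  proof (rule nn_integral_cong)
    fix a :: real
    have "exponential_density l a * exp (- s * a) = exponential_density (l + s) a * (l / (l + s))"
      using assms by (auto simp: exponential_density_def field_simps exp_add[symmetric])
    then show "ennreal (exponential_density l a) * ennreal (exp (- s * a)) =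
        ennreal (exponential_density (l + s) a) * ennreal (l / (l + s))"
      using assms by (simp add: ennreal_mult'[symmetric] exponential_density_nonneg)
  qed
  also have "\<dots> = (\<integral>\<^sup>+a. ennreal (exponential_density (l + s) a) \<partial>lborel) * ennreal (l / (l + s))"
    by (rule nn_integral_multc) auto
  finally show ?thesis
    using assms by (simp add: total)
qed

lemma nn_integral_exp_vertex_dist:
  assumes "0 \<le> s"
  shows "(\<integral>\<^sup>+y. ennreal (exp (- s * fst y)) \<partial>vertex_dist p) = ennreal (1 / (1 + s))"
proof -
  let ?A = "density lborel (exponential_density 1)"
  let ?C = "measure_pmf (bernoulli_pmf (1/2)) \<Otimes>\<^sub>M measure_pmf (geometric_pmf p)"
  interpret C: prob_space ?C by (intro prob_space_pair prob_space_measure_pmf)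
  have "(\<integral>\<^sup>+y. ennreal (exp (- s * fst y)) \<partial>(?A \<Otimes>\<^sub>M ?C)) =
      (\<integral>\<^sup>+a. \<integral>\<^sup>+c. ennreal (exp (- s * a)) \<partial>?C \<partial>?A)"
    using C.nn_integral_fst[of "\<lambda>y. ennreal (exp (- s * fst y))"] by simp
  also have "\<dots> = (\<integral>\<^sup>+a. ennreal (exp (- s * a)) \<partial>?A)"
    by (simp add: C.emeasure_space_1)
  finally show ?thesis
    using nn_integral_exp_exponential_density[of 1 s] assms by (simp add: vertex_dist_def)
qed

lemma emeasure_birth_le_chernoff:
  assumes "0 \<le> s"
  shows "emeasure (tree_space p) {\<omega>\<in>space (tree_space p). birth \<omega> v \<le> t}
     \<le> ennreal (exp (s * t) * (1 / (1 + s)) ^ length v)"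
proof -
  let ?P = "PiM (ancestors v) (\<lambda>_. vertex_dist p)"
  define f where "f \<omega> = (\<Prod>u\<in>ancestors v. ennreal (exp (- s * fst (\<omega> u))))" for \<omega> :: sample
  have f_eq: "f \<omega> = ennreal (exp (- s * birth \<omega> v))" for \<omega>
    unfolding f_def birth_eq_sum_ancestors Evar_def
    by (simp add: prod_ennreal exp_sum[symmetric] sum_distrib_left sum_negf)
  have sets: "{\<omega>\<in>space (tree_space p). birth \<omega> v \<le> t} \<in> sets (tree_space p)"
    by measurable
  have "emeasure (tree_space p) {\<omega>\<in>space (tree_space p). birth \<omega> v \<le> t}
     = (\<integral>\<^sup>+\<omega>. indicator {\<omega>\<in>space (tree_space p). birth \<omega> v \<le> t} \<omega> \<partial>tree_space p)"
    by (rule nn_integral_indicator[OF sets, symmetric])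
  also have "\<dots> \<le> (\<integral>\<^sup>+\<omega>. ennreal (exp (s * t)) * f \<omega> \<partial>tree_space p)"
  proof (rule nn_integral_mono)
    fix \<omega>
    have "1 \<le> exp (s * t) * exp (- s * birth \<omega> v)" if "birth \<omega> v \<le> t"
      using that assms by (simp add: exp_add[symmetric] mult_left_mono algebra_simps)
    then show "indicator {\<omega>\<in>space (tree_space p). birth \<omega> v \<le> t} \<omega> \<le> ennreal (exp (s * t)) * f \<omega>"
      by (auto simp: f_eq ennreal_mult'[symmetric] indicator_def simp del: ennreal_mult' intro: ennreal_leI[of 1, simplified])
  qed
  also have "\<dots> = ennreal (exp (s * t)) * (\<integral>\<^sup>+\<omega>. f \<omega> \<partial>tree_space p)"
    by (intro nn_integral_cmult) (unfold f_eq, measurable)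
  also have "(\<integral>\<^sup>+\<omega>. f \<omega> \<partial>tree_space p) = (\<integral>\<^sup>+\<omega>. f \<omega> \<partial>?P)"
    by (rule nn_integral_tree_space_eq_PiM) (auto simp: f_def intro!: prod.cong)
  also have "\<dots> = (\<Prod>u\<in>ancestors v. (\<integral>\<^sup>+y. ennreal (exp (- s * fst y)) \<partial>vertex_dist p))"
  proof -
    interpret product_sigma_finite "\<lambda>_. vertex_dist p"
      by (simp add: product_sigma_finite_def prob_space_imp_sigma_finite prob_space_vertex_dist)
    show ?thesis
      unfolding f_def by (rule product_nn_integral_prod) auto
  qed
  also have "\<dots> = ennreal (1 / (1 + s)) ^ length v"
    using nn_integral_exp_vertex_dist[OF assms, of p] by (simp add: card_ancestors)
  finally show ?thesis
    using assms by (simp add: ennreal_mult' ennreal_power)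
qed

lemma emeasure_birth_le_Upsilon:
  assumes "0 < length v" and "0 < t"
  shows "emeasure (tree_space p) {\<omega>\<in>space (tree_space p). birth \<omega> v \<le> t}
     \<le> ennreal (exp (- real (length v) * Upsilon (t / real (length v))))"
proof -
  let ?m = "real (length v)"
  define \<rho> where "\<rho> = t / ?m"
  have "0 < \<rho>" using assms by (simp add: \<rho>_def)
  show ?thesis
  proof (cases "\<rho> \<le> 1")
    case False
    then show ?thesis
      using emeasure_birth_le_chernoff[of 0 p v t] by (simp add: \<rho>_def Upsilon_def)
  next
    case True
    \<comment> \<open>the optimal Chernoff parameter\<close>
    define s where "s = 1 / \<rho> - 1"
    have "0 \<le> s" using True \<open>0 < \<rho>\<close> by (simp add: s_def field_simps)
    have "exp (s * t) * (1 / (1 + s)) ^ length v = exp (- ?m * Upsilon \<rho>)"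
    proof -
      have "1 / (1 + s) = \<rho>" using \<open>0 < \<rho>\<close> by (simp add: s_def)
      moreover have "s * t = ?m - t" using \<open>0 < \<rho>\<close> assms by (simp add: s_def \<rho>_def field_simps)
      moreover have "\<rho> ^ length v = exp (?m * ln \<rho>)"
        using \<open>0 < \<rho>\<close> by (simp add: exp_of_nat_mult)
      moreover have "?m * \<rho> = t" using assms by (simp add: \<rho>_def)
      ultimately show ?thesis
        using True by (simp add: Upsilon_def exp_add[symmetric] algebra_simps)
    qed
    then show ?thesis
      using emeasure_birth_le_chernoff[OF \<open>0 \<le> s\<close>, of p v t] by (simp add: \<rho>_def)
  qed
qed

section \<open>The rate function \<open>\<Upsilon>\<close> and the constant \<open>\<theta>\<close>\<close>

lemma Upsilon_nonneg: "0 < x \<Longrightarrow> 0 \<le> Upsilon x"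
  using ln_le_minus_one[of x] by (simp add: Upsilon_def)

lemma Upsilon_min_1: "Upsilon (min x 1) = Upsilon x"
  by (simp add: Upsilon_def min_def)

lemma two_le_Upsilon:
  assumes "0 < x" and "x \<le> exp (-3)"
  shows "2 \<le> Upsilon x"
proof -
  have "ln x \<le> -3" using assms by (metis ln_exp ln_le_cancel_iff exp_gt_zero)
  moreover have "x \<le> 1" using assms(2) by (smt (verit) exp_le_one_iff)
  ultimately show ?thesis using assms(1) by (simp add: Upsilon_def)
qed

lemma continuous_on_Upsilon: "0 < r \<Longrightarrow> continuous_on {r..b} Upsilon"
proof -
  assume "0 < r"
  then have "continuous_on {r..b} (\<lambda>x. min x 1 - 1 - ln (min x 1))"
    by (intro continuous_intros) auto
  then show ?thesis
    by (rule continuous_on_eq) (simp add: Upsilon_def min_def)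
qed

lemma ln_2_less_2: "ln (2::real) < 2"
  using ln_2_less_1 by simp

lemma Upsilon_attains:
  assumes "0 \<le> y" "y \<le> ln 2" and "exp (-3) \<le> r" "Upsilon r \<le> y"
  shows "\<exists>\<rho>. exp (-3) \<le> \<rho> \<and> \<rho> \<le> r \<and> Upsilon \<rho> = y"
proof -
  have "2 \<le> Upsilon (exp (-3))" by (rule two_le_Upsilon) auto
  then have "y \<le> Upsilon (exp (-3))" using assms(2) ln_2_less_2 by linarith
  then show ?thesis
    using IVT2'[of Upsilon r y "exp (-3)"] assms continuous_on_Upsilon[of "exp (-3)" r] by auto
qed

lemma bdd_above_theta_set:
  assumes "\<forall>a\<in>{0..1}. \<gamma> a \<ge> 0"
  shows "bdd_above {a / \<rho> | a \<rho>. \<gamma> a + Upsilon \<rho> = ln 2 \<and> a \<in> {0..1} \<and> 0 < \<rho>}"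
proof (rule bdd_aboveI, safe)
  fix a \<rho> :: real assume eq: "\<gamma> a + Upsilon \<rho> = ln 2" and a: "a \<in> {0..1}" and "0 < \<rho>"
  have "exp (-3) < \<rho>"
  proof (rule ccontr)
    assume "\<not> exp (-3) < \<rho>"
    then have "2 \<le> Upsilon \<rho>" using two_le_Upsilon \<open>0 < \<rho>\<close> by simp
    moreover have "0 \<le> \<gamma> a" using assms a by blast
    ultimately show False using eq ln_2_less_2 by linarith
  qed
  then show "a / \<rho> \<le> 1 / exp (-3)"
    using a by (intro frac_le) auto
qed

lemma le_theta:
  assumes "\<forall>a\<in>{0..1}. \<gamma> a \<ge> 0"
    and "\<gamma> a + Upsilon \<rho> = ln 2" "a \<in> {0..1}" "0 < \<rho>"
  shows "a / \<rho> \<le> theta \<gamma>"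
  unfolding theta_def using assms by (intro cSup_upper bdd_above_theta_set) auto

lemma theta_pos:
  assumes "continuous_on {0..1} \<gamma>" and nonneg: "\<forall>a\<in>{0..1}. \<gamma> a \<ge> 0"
    and "\<gamma> 0 < ln 2"
  shows "0 < theta \<gamma>"
proof -
  obtain d where "0 < d" and d: "\<And>x. x \<in> {0..1} \<Longrightarrow> dist x 0 < d \<Longrightarrow> dist (\<gamma> x) (\<gamma> 0) < ln 2 - \<gamma> 0"
    using assms(1,3) unfolding continuous_on_iff by (metis atLeastAtMost_iff diff_gt_0_iff_gt order_refl zero_le_one)
  define a where "a = min (d/2) 1"
  have a: "0 < a" "a \<in> {0..1}" "dist a 0 < d" using \<open>0 < d\<close> by (auto simp: a_def)
  have "\<gamma> a < ln 2" using d[OF a(2,3)] by (simp add: dist_real_def abs_less_iff)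
  moreover have "0 \<le> \<gamma> a" using nonneg a(2) by blast
  moreover have "Upsilon 1 = 0" by (simp add: Upsilon_def)
  ultimately obtain \<rho> where \<rho>: "exp (-3) \<le> \<rho>" "Upsilon \<rho> = ln 2 - \<gamma> a"
    using Upsilon_attains[of "ln 2 - \<gamma> a" 1] by auto
  then have "0 < \<rho>" by (meson exp_gt_zero less_le_trans)
  then have "a / \<rho> \<le> theta \<gamma>"
    using le_theta[OF nonneg _ a(2)] \<rho> by simp
  moreover have "0 < a / \<rho>" using a(1) \<open>0 < \<rho>\<close> by simp
  ultimately show ?thesis by linarith
qed

lemma ln_2_less_gamma_plus_Upsilon:
  assumes nonneg: "\<forall>a\<in>{0..1}. \<gamma> a \<ge> 0"
    and "theta \<gamma> < c" "0 < c" "0 < \<rho>" "c * \<rho> \<le> 1"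
  shows "ln 2 < \<gamma> (c * \<rho>) + Upsilon \<rho>"
proof (rule ccontr)
  define a where "a = c * \<rho>"
  have a: "0 < a" "a \<in> {0..1}" using assms by (auto simp: a_def)
  assume "\<not> ?thesis"
  then have le: "Upsilon (min \<rho> 1) \<le> ln 2 - \<gamma> a" by (simp add: Upsilon_min_1 a_def)
  have "0 \<le> \<gamma> a" using nonneg a(2) by blast
  have "exp (-3) \<le> min \<rho> 1"
  proof (rule ccontr)
    assume "\<not> ?thesis"
    then have "2 \<le> Upsilon (min \<rho> 1)" using two_le_Upsilon \<open>0 < \<rho>\<close> by simp
    then show False using le \<open>0 \<le> \<gamma> a\<close> ln_2_less_2 by linarith
  qed
  moreover have "0 \<le> ln 2 - \<gamma> a"
    using Upsilon_nonneg[of "min \<rho> 1"] le \<open>0 < \<rho>\<close> by simp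
  \<comment> \<open>lowering \<rho> to a point of the level set can only increase the ratio a / \<rho>\<close>
  ultimately obtain \<rho>' where \<rho>': "exp (-3) \<le> \<rho>'" "\<rho>' \<le> min \<rho> 1" "Upsilon \<rho>' = ln 2 - \<gamma> a"
    using Upsilon_attains[of "ln 2 - \<gamma> a" "min \<rho> 1"] le \<open>0 \<le> \<gamma> a\<close> by auto
  then have "0 < \<rho>'" by (meson exp_gt_zero less_le_trans)
  have "c = a / \<rho>" using \<open>0 < \<rho>\<close> by (simp add: a_def)
  also have "\<dots> \<le> a / \<rho>'"
    using \<rho>'(2) \<open>0 < \<rho>'\<close> a(1) by (intro divide_left_mono) auto
  also have "\<dots> \<le> theta \<gamma>"
    using le_theta[OF nonneg _ a(2) \<open>0 < \<rho>'\<close>] \<rho>'(3) by simp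
  finally show False using assms(2) by linarith
qed

lemma compact_continuous_on_gap:
  fixes f :: "'a::topological_space \<Rightarrow> real"
  assumes "compact K" "continuous_on K f" "\<And>x. x \<in> K \<Longrightarrow> y < f x"
  shows "\<exists>\<delta>>0. \<forall>x\<in>K. y + \<delta> \<le> f x"
proof (cases "K = {}")
  case False
  then obtain x0 where "x0 \<in> K" "\<And>x. x \<in> K \<Longrightarrow> f x0 \<le> f x"
    using continuous_attains_inf[OF assms(1) _ assms(2)] by blast
  then show ?thesis using assms(3) by (intro exI[of _ "f x0 - y"]) auto
qed (auto intro: exI[of _ 1])

lemma gamma_Upsilon_gap:
  assumes cont: "continuous_on {0..1} \<gamma>" and nonneg: "\<forall>a\<in>{0..1}. \<gamma> a \<ge> 0"
    and "theta \<gamma> < c" "0 < c"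
  shows "\<exists>\<delta>>0. \<forall>\<rho>. 0 < \<rho> \<longrightarrow> c * \<rho> \<le> 1 \<longrightarrow> ln 2 + \<delta> \<le> \<gamma> (c * \<rho>) + Upsilon \<rho>"
proof -
  let ?K = "{exp (-3) .. 1 / c}"
  have K: "0 < \<rho> \<and> c * \<rho> \<le> 1" if "\<rho> \<in> ?K" for \<rho>
  proof
    show "0 < \<rho>" using that by (meson atLeastAtMost_iff exp_gt_zero less_le_trans)
    show "c * \<rho> \<le> 1" using that \<open>0 < c\<close> by (auto simp: field_simps)
  qed
  have "(*) c ` ?K \<subseteq> {0..1}"
    using K \<open>0 < c\<close> by (fastforce simp: less_imp_le)
  then have "continuous_on ?K (\<lambda>\<rho>. \<gamma> (c * \<rho>))"
    by (intro continuous_on_compose2[OF cont] continuous_intros)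
  then have "continuous_on ?K (\<lambda>\<rho>. \<gamma> (c * \<rho>) + Upsilon \<rho>)"
    by (intro continuous_on_add continuous_on_Upsilon) auto
  moreover have "ln 2 < \<gamma> (c * \<rho>) + Upsilon \<rho>" if "\<rho> \<in> ?K" for \<rho>
    using K[OF that] assms by (intro ln_2_less_gamma_plus_Upsilon) auto
  ultimately obtain \<delta> where "0 < \<delta>" and \<delta>: "\<forall>\<rho>\<in>?K. ln 2 + \<delta> \<le> \<gamma> (c * \<rho>) + Upsilon \<rho>"
    using compact_continuous_on_gap[of ?K] by blast
  show ?thesis
  proof (intro exI[of _ "min \<delta> (2 - ln 2)"] conjI allI impI)
    show "0 < min \<delta> (2 - ln 2)" using \<open>0 < \<delta>\<close> ln_2_less_2 by simp
    fix \<rho> :: real assume "0 < \<rho>" "c * \<rho> \<le> 1"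
    then have "0 \<le> \<gamma> (c * \<rho>)" using nonneg \<open>0 < c\<close> by simp
    have "\<rho> \<le> 1 / c" using \<open>c * \<rho> \<le> 1\<close> \<open>0 < c\<close> by (simp add: field_simps)
    show "ln 2 + min \<delta> (2 - ln 2) \<le> \<gamma> (c * \<rho>) + Upsilon \<rho>"
    proof (cases "exp (-3) \<le> \<rho>")
      case True
      then have "ln 2 + \<delta> \<le> \<gamma> (c * \<rho>) + Upsilon \<rho>" using \<delta> \<open>\<rho> \<le> 1 / c\<close> by simp
      then show ?thesis using min.cobounded1[of \<delta> "2 - ln 2"] by linarith
    next
      case False
      then have "2 \<le> Upsilon \<rho>" using two_le_Upsilon \<open>0 < \<rho>\<close> by simp
      then show ?thesis using \<open>0 \<le> \<gamma> (c * \<rho>)\<close> by linarith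
    qed
  qed
qed

section \<open>Tail bounds for path weights\<close>

definition weight_tail :: "real \<Rightarrow> real \<Rightarrow> vertex \<Rightarrow> real" where
  "weight_tail p a v =
     measure (tree_space p) {\<omega> \<in> space (tree_space p). path_weight \<omega> v > a * real (length v)}"

lemma weight_tail_antimono:
  assumes "a \<le> b"
  shows "weight_tail p b v \<le> weight_tail p a v"
proof -
  interpret prob_space "tree_space p" by (rule prob_space_tree_space)
  have "a * real (length v) \<le> b * real (length v)"
    using assms by (rule mult_right_mono) simp
  moreover have "{\<omega> \<in> space (tree_space p). a * real (length v) < Wv \<omega> v} \<in> events"
    by measurable
  ultimately show ?thesis
    unfolding weight_tail_def path_weight_eq_Wv by (intro finite_measure_mono) auto
qed

lemma eventually_weight_tail_le:
  assumes "g \<in> o(\<lambda>m. real m)" and "0 < \<delta>"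
    and "\<forall>v. weight_tail p a v \<le> exp (- real (length v) * \<gamma> a + g (length v))"
  shows "\<forall>\<^sub>F m in at_top. \<forall>v. length v = m \<longrightarrow>
    weight_tail p a v \<le> exp (- real m * (\<gamma> a - \<delta>))"
proof -
  have "\<forall>\<^sub>F m in at_top. norm (g m) \<le> \<delta> * norm (real m)"
    using landau_o.smallD[OF assms(1,2)] .
  then show ?thesis
  proof eventually_elim
    case (elim m)
    then have "g m \<le> \<delta> * real m" by simp
    then show ?case
      using assms(3) by (auto simp: algebra_simps intro: order.trans)
  qed
qed

lemma finite_weight_tail_bound:
  assumes bound: "\<forall>a\<in>A. \<exists>g :: nat \<Rightarrow> real. g \<in> o(\<lambda>m. real m) \<and>
        (\<forall>v. weight_tail p a v \<le> exp (- real (length v) * \<gamma> a + g (length v)))"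
    and "finite A" and "0 < \<delta>"
  shows "\<exists>M0. \<forall>a\<in>A. \<forall>v. M0 \<le> length v \<longrightarrow>
     weight_tail p a v \<le> exp (- real (length v) * (\<gamma> a - \<delta>))"
proof -
  have "\<forall>a\<in>A. \<forall>\<^sub>F m in at_top. \<forall>v. length v = m \<longrightarrow>
      weight_tail p a v \<le> exp (- real m * (\<gamma> a - \<delta>))"
    using bound \<open>0 < \<delta>\<close> eventually_weight_tail_le by blast
  then have "\<forall>\<^sub>F m in at_top. \<forall>a\<in>A. \<forall>v. length v = m \<longrightarrow>
      weight_tail p a v \<le> exp (- real m * (\<gamma> a - \<delta>))"
    by (rule eventually_ball_finite[OF \<open>finite A\<close>])
  then show ?thesis
    unfolding eventually_at_top_linorder by blast
qed

lemma uniform_weight_tail_bound: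
  assumes cont: "continuous_on {0..1} \<gamma>"
    and bound: "\<forall>a\<in>{0..1}. \<exists>g :: nat \<Rightarrow> real. g \<in> o(\<lambda>m. real m) \<and>
        (\<forall>v. weight_tail p a v \<le> exp (- real (length v) * \<gamma> a + g (length v)))"
    and "0 < \<delta>"
  shows "\<exists>M0. \<forall>a\<in>{0..1}. \<forall>v. M0 \<le> length v \<longrightarrow>
     weight_tail p a v \<le> exp (- real (length v) * (\<gamma> a - \<delta>))"
proof -
  obtain d where "0 < d" and d: "\<And>x x'. x \<in> {0..1} \<Longrightarrow> x' \<in> {0..1} \<Longrightarrow> dist x' x < d \<Longrightarrow>
      dist (\<gamma> x') (\<gamma> x) < \<delta>/2"
    using compact_uniformly_continuous[OF cont compact_Icc] \<open>0 < \<delta>\<close>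
    unfolding uniformly_continuous_on_def by (metis half_gt_zero)
  define N :: nat where "N = nat \<lfloor>1/d\<rfloor> + 1"
  have "0 < N" by (simp add: N_def)
  have "1 / real N < d"
  proof -
    have "1/d < real N" unfolding N_def by linarith
    then show ?thesis using \<open>0 < d\<close> \<open>0 < N\<close> by (simp add: field_simps)
  qed
  have grid: "real j / real N \<in> {0..1}" if "j \<le> N" for j
    using that \<open>0 < N\<close> by (auto simp: field_simps)
  then have "\<forall>a\<in>(\<lambda>j. real j / real N) ` {..N}. \<exists>g :: nat \<Rightarrow> real. g \<in> o(\<lambda>m. real m) \<and>
      (\<forall>v. weight_tail p a v \<le> exp (- real (length v) * \<gamma> a + g (length v)))"
    using bound by auto
  from finite_weight_tail_bound[OF this _ half_gt_zero[OF \<open>0 < \<delta>\<close>]]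
  obtain M0 where M0: "\<And>j v. M0 \<le> length v \<Longrightarrow> j \<le> N \<Longrightarrow>
      weight_tail p (real j / real N) v \<le> exp (- real (length v) * (\<gamma> (real j / real N) - \<delta>/2))"
    by auto
  show ?thesis
  proof (intro exI[of _ M0] ballI allI impI)
    fix a :: real and v :: vertex assume a: "a \<in> {0..1}" and "M0 \<le> length v"
    define j where "j = nat \<lfloor>a * real N\<rfloor>"
    have "j \<le> N"
      using a mult_left_le_one_le[of "real N" a] by (simp add: j_def nat_le_iff floor_le_iff)
    have "real j \<le> a * real N" "a * real N < real j + 1"
      using a by (simp_all add: j_def of_nat_nat)
    have "real j / real N \<le> a"
      using \<open>real j \<le> a * real N\<close> \<open>0 < N\<close> by (simp add: field_simps)
    have "a - real j / real N = (a * real N - real j) / real N"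
      using \<open>0 < N\<close> by (simp add: field_simps)
    also have "\<dots> < 1 / real N"
      using \<open>a * real N < real j + 1\<close> \<open>0 < N\<close> by (intro divide_strict_right_mono) auto
    finally have "a - real j / real N < 1 / real N" .
    with \<open>real j / real N \<le> a\<close> have "\<gamma> a - \<delta>/2 \<le> \<gamma> (real j / real N)"
      using d[OF a grid[OF \<open>j \<le> N\<close>]] \<open>1 / real N < d\<close> unfolding dist_real_def by linarith
    have "weight_tail p a v \<le> weight_tail p (real j / real N) v"
      by (rule weight_tail_antimono) fact
    also have "\<dots> \<le> exp (- real (length v) * (\<gamma> (real j / real N) - \<delta>/2))"
      by (rule M0) fact+
    also have "\<dots> \<le> exp (- real (length v) * (\<gamma> a - \<delta>))"
      using \<open>\<gamma> a - \<delta>/2 \<le> \<gamma> (real j / real N)\<close> \<open>0 < \<delta>\<close>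
      by (intro exp_mono mult_left_mono_neg) auto
    finally show "weight_tail p a v \<le> exp (- real (length v) * (\<gamma> a - \<delta>))" .
  qed
qed

lemma one_le_Wv: "v \<noteq> [] \<Longrightarrow> Choice \<omega> [] = last v \<Longrightarrow> 1 \<le> Wv \<omega> v"
proof (induction v)
  case (Cons b v)
  have "1 - Wv \<omega> v \<le> max (Yvar \<omega> v) (1 - Wv \<omega> v)" by simp
  moreover have "Yvar \<omega> [] \<le> 1" by (simp add: Yvar_def)
  ultimately show ?case using Cons by (cases "v = []") (auto simp: max_def)
qed simp

lemma emeasure_root_choice:
  "emeasure (tree_space p) {\<omega> \<in> space (tree_space p). Choice \<omega> [] = b} = ennreal (1/2)"
proof -
  interpret product_prob_space "\<lambda>_. vertex_dist p" UNIV by (rule product_prob_space_vertex_dist)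
  let ?E = "density lborel (exponential_density 1 :: real \<Rightarrow> real)"
  let ?BG = "measure_pmf (bernoulli_pmf (1/2)) \<Otimes>\<^sub>M measure_pmf (geometric_pmf p)"
  let ?A = "UNIV \<times> ({b} \<times> UNIV) :: (real \<times> bool \<times> nat) set"
  interpret E: prob_space ?E by (rule prob_space_exponential_density) simp
  interpret BG: prob_space ?BG by (intro prob_space_pair prob_space_measure_pmf)
  have "?A \<in> sets (vertex_dist p)"
    unfolding vertex_dist_def by (intro pair_measureI) auto
  then have "emeasure (tree_space p) {\<omega> \<in> space (tree_space p). Choice \<omega> [] = b} =
      emeasure (vertex_dist p) ?A"
    unfolding tree_space_def Choice_def
    using emeasure_PiM_Collect_single[of "[]" ?A] by (simp add: mem_Times_iff)
  also have "\<dots> = emeasure ?E UNIV * emeasure ?BG ({b} \<times> UNIV)"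
    unfolding vertex_dist_def by (rule BG.emeasure_pair_measure_Times) auto
  also have "emeasure ?BG ({b} \<times> UNIV) =
      emeasure (measure_pmf (bernoulli_pmf (1/2))) {b} * emeasure (measure_pmf (geometric_pmf p)) UNIV"
    by (rule measure_pmf.emeasure_pair_measure_Times) auto
  finally show ?thesis
    using E.emeasure_space_1 by (simp add: emeasure_pmf_single)
qed

lemma weight_tail_zero_ge_half:
  assumes "v \<noteq> []"
  shows "1/2 \<le> weight_tail p 0 v"
proof -
  interpret prob_space "tree_space p" by (rule prob_space_tree_space)
  have "ennreal (prob {\<omega> \<in> space (tree_space p). Choice \<omega> [] = last v}) = ennreal (1/2)"
    using emeasure_root_choice[of p "last v"] by (simp only: emeasure_eq_measure)
  then have "prob {\<omega> \<in> space (tree_space p). Choice \<omega> [] = last v} = 1/2"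
    by (subst (asm) ennreal_inj) auto
  moreover have "prob {\<omega> \<in> space (tree_space p). Choice \<omega> [] = last v} \<le> weight_tail p 0 v"
    unfolding weight_tail_def path_weight_eq_Wv
    using one_le_Wv[OF assms] by (intro finite_measure_mono) (fastforce, measurable)
  ultimately show ?thesis by simp
qed

lemma gamma_zero_less_ln_2:
  assumes "g \<in> o(\<lambda>m. real m)"
    and "\<forall>v. weight_tail p 0 v \<le> exp (- real (length v) * \<gamma> 0 + g (length v))"
  shows "\<gamma> 0 < ln 2"
proof -
  have "\<forall>\<^sub>F m in at_top. norm (g m) \<le> ln 2 / 4 * norm (real m)"
    by (rule landau_o.smallD[OF assms(1)]) simp
  then obtain M0 where M0: "\<And>m. M0 \<le> m \<Longrightarrow> g m \<le> ln 2 / 4 * real m"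
    unfolding eventually_at_top_linorder by force
  define m where "m = max M0 4"
  have "4 \<le> m" "g m \<le> ln 2 / 4 * real m" using M0 by (auto simp: m_def)
  have "replicate m True \<noteq> []" using \<open>4 \<le> m\<close> by simp
  then have "1/2 \<le> exp (- real m * \<gamma> 0 + g m)"
    using order.trans[OF weight_tail_zero_ge_half assms(2)[rule_format, of "replicate m True"]] by simp
  then have "exp (- ln 2) \<le> exp (- real m * \<gamma> 0 + g m)"
    by (simp add: exp_minus)
  then have "- ln 2 \<le> - real m * \<gamma> 0 + g m"
    by simp
  then have "\<gamma> 0 \<le> ln 2 / real m + ln 2 / 4"
    using \<open>g m \<le> ln 2 / 4 * real m\<close> \<open>4 \<le> m\<close> by (simp add: field_simps)
  also have "ln 2 / real m \<le> ln 2 / 4"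
    using \<open>4 \<le> m\<close> by (intro divide_left_mono) auto
  finally show ?thesis using ln_gt_zero[of "2::real"] by linarith
qed

section \<open>Union bound over the tree\<close>

lemma emeasure_birth_le_Wv_gt_le:
  assumes gap: "\<forall>\<rho>. 0 < \<rho> \<longrightarrow> c * \<rho> \<le> 1 \<longrightarrow> ln 2 + \<delta> \<le> \<gamma> (c * \<rho>) + Upsilon \<rho>"
    and tail: "\<forall>a\<in>{0..1}. \<forall>v. M0 \<le> length v \<longrightarrow>
      weight_tail p a v \<le> exp (- real (length v) * (\<gamma> a - \<eta>))"
    and "0 < c" "0 < t" "M0 \<le> length v" "c * t < real (length v)"
  shows "emeasure (tree_space p) {\<omega>\<in>space (tree_space p). birth \<omega> v \<le> t \<and> Wv \<omega> v > c * t}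
     \<le> ennreal (exp (- real (length v) * (ln 2 + \<delta> - \<eta>)))"
proof -
  interpret prob_space "tree_space p" by (rule prob_space_tree_space)
  let ?m = "real (length v)"
  have "0 < ?m" using assms(3-6) by (smt (verit) mult_pos_pos)
  define \<rho> where "\<rho> = t / ?m"
  have "0 < \<rho>" "c * \<rho> \<le> 1" "c * \<rho> \<in> {0..1}"
    using \<open>0 < ?m\<close> assms(3,4,6) by (simp_all add: \<rho>_def field_simps)
  have "emeasure (tree_space p) {\<omega>\<in>space (tree_space p). Wv \<omega> v > c * t}
      \<le> ennreal (exp (- ?m * (\<gamma> (c * \<rho>) - \<eta>)))"
  proof -
    have "c * t = c * \<rho> * ?m" using \<open>0 < ?m\<close> by (simp add: \<rho>_def)
    then have "emeasure (tree_space p) {\<omega>\<in>space (tree_space p). Wv \<omega> v > c * t} =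
        ennreal (weight_tail p (c * \<rho>) v)"
      unfolding weight_tail_def path_weight_eq_Wv by (simp only: emeasure_eq_measure)
    then show ?thesis
      using tail \<open>c * \<rho> \<in> {0..1}\<close> assms(5) by (simp add: ennreal_leI)
  qed
  moreover have "emeasure (tree_space p) {\<omega>\<in>space (tree_space p). birth \<omega> v \<le> t}
      \<le> ennreal (exp (- ?m * Upsilon \<rho>))"
    unfolding \<rho>_def by (rule emeasure_birth_le_Upsilon) (use \<open>0 < ?m\<close> assms(4) in auto)
  ultimately have "emeasure (tree_space p) {\<omega>\<in>space (tree_space p). birth \<omega> v \<le> t \<and> Wv \<omega> v > c * t}
      \<le> ennreal (exp (- ?m * Upsilon \<rho>)) * ennreal (exp (- ?m * (\<gamma> (c * \<rho>) - \<eta>)))"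
    unfolding emeasure_birth_le_Wv_gt by (intro mult_mono) auto
  also have "\<dots> = ennreal (exp (- ?m * (\<gamma> (c * \<rho>) + Upsilon \<rho> - \<eta>)))"
    by (simp add: ennreal_mult'[symmetric] exp_add[symmetric] algebra_simps)
  also have "\<dots> \<le> ennreal (exp (- ?m * (ln 2 + \<delta> - \<eta>)))"
    using gap \<open>0 < \<rho>\<close> \<open>c * \<rho> \<le> 1\<close> \<open>0 < ?m\<close>
    by (intro ennreal_leI exp_mono mult_left_mono_neg) auto
  finally show ?thesis .
qed

lemma finite_vertices_of_length: "finite {v :: vertex. length v = m}"
  using finite_lists_length_eq[of "UNIV :: bool set" m] by simp

lemma card_vertices_of_length: "card {v :: vertex. length v = m} = 2 ^ m"
  using card_lists_length_eq[of "UNIV :: bool set" m] by simp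

lemma emeasure_level_le:
  assumes "0 < \<beta>"
    and vertex: "\<And>v. x < real (length v) \<Longrightarrow>
      emeasure (tree_space p) {\<omega>\<in>space (tree_space p). birth \<omega> v \<le> t \<and> Wv \<omega> v > x}
        \<le> ennreal (exp (- real (length v) * (ln 2 + \<beta>)))"
  shows "emeasure (tree_space p)
      (\<Union>v\<in>{v. length v = m}. {\<omega>\<in>space (tree_space p). birth \<omega> v \<le> t \<and> Wv \<omega> v > x})
    \<le> ennreal (exp (- (\<beta> * x / 2)) * exp (- \<beta> / 2) ^ m)"
proof (cases "x < real m")
  case False
  have "\<not> x < Wv \<omega> v" if "length v = m" for \<omega> v
    using Wv_le_length[of \<omega> v] False that by linarith
  then show ?thesis by simp
next
  case True
  have "(2::real) ^ m * exp (- real m * (ln 2 + \<beta>)) = exp (- \<beta> * real m / 2) * exp (- \<beta> * real m / 2)"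
  proof -
    have "(2::real) ^ m = exp (real m * ln 2)" by (simp add: exp_of_nat_mult)
    then show ?thesis by (simp add: exp_add[symmetric] algebra_simps)
  qed
  \<comment> \<open>half of the exponential margin pays for the depth, half is kept for the sum over depths\<close>
  also have "\<dots> \<le> exp (- (\<beta> * x / 2)) * exp (- \<beta> / 2) ^ m"
  proof (rule mult_mono)
    show "exp (- \<beta> * real m / 2) \<le> exp (- (\<beta> * x / 2))"
      using True \<open>0 < \<beta>\<close> by (simp add: mult_left_mono)
    show "exp (- \<beta> * real m / 2) \<le> exp (- \<beta> / 2) ^ m"
      by (simp add: exp_of_nat_mult[symmetric] algebra_simps)
  qed auto
  finally have level: "(2::real) ^ m * exp (- real m * (ln 2 + \<beta>)) \<le> exp (- (\<beta> * x / 2)) * exp (- \<beta> / 2) ^ m" .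
  have "emeasure (tree_space p)
      (\<Union>v\<in>{v. length v = m}. {\<omega>\<in>space (tree_space p). birth \<omega> v \<le> t \<and> Wv \<omega> v > x})
    \<le> (\<Sum>v\<in>{v. length v = m}. emeasure (tree_space p) {\<omega>\<in>space (tree_space p). birth \<omega> v \<le> t \<and> Wv \<omega> v > x})"
    by (rule emeasure_subadditive_finite[OF finite_vertices_of_length]) (intro image_subsetI, measurable)
  also have "\<dots> \<le> (\<Sum>v\<in>{v :: vertex. length v = m}. ennreal (exp (- real m * (ln 2 + \<beta>))))"
    using vertex True by (intro sum_mono) auto
  also have "\<dots> = ennreal (2 ^ m * exp (- real m * (ln 2 + \<beta>)))"
    by (simp add: card_vertices_of_length ennreal_mult' ennreal_power[symmetric])
  also have "\<dots> \<le> ennreal (exp (- (\<beta> * x / 2)) * exp (- \<beta> / 2) ^ m)"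
    using level by (rule ennreal_leI)
  finally show ?thesis .
qed

lemma measure_wh_gt_le:
  assumes "0 < \<beta>"
    and vertex: "\<And>v. x < real (length v) \<Longrightarrow>
      emeasure (tree_space p) {\<omega>\<in>space (tree_space p). birth \<omega> v \<le> t \<and> Wv \<omega> v > x}
        \<le> ennreal (exp (- real (length v) * (ln 2 + \<beta>)))"
  shows "measure (tree_space p) {\<omega> \<in> space (tree_space p). wh \<omega> t > ereal x}
    \<le> exp (- (\<beta> * x / 2)) / (1 - exp (- \<beta> / 2))"
proof -
  interpret prob_space "tree_space p" by (rule prob_space_tree_space)
  define r where "r = exp (- \<beta> / 2)"
  have "0 < r" "r < 1" using \<open>0 < \<beta>\<close> by (auto simp: r_def)
  define U where "U m =
    (\<Union>v\<in>{v. length v = m}. {\<omega>\<in>space (tree_space p). birth \<omega> v \<le> t \<and> Wv \<omega> v > x})" for m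
  have U_sets: "U m \<in> sets (tree_space p)" for m
    unfolding U_def using finite_vertices_of_length by measurable
  have "{\<omega> \<in> space (tree_space p). wh \<omega> t > ereal x} \<subseteq> (\<Union>m. U m)"
    by (auto simp: wh_def less_SUP_iff U_def)
  then have "emeasure (tree_space p) {\<omega> \<in> space (tree_space p). wh \<omega> t > ereal x}
      \<le> emeasure (tree_space p) (\<Union>m. U m)"
    by (rule emeasure_mono) (use U_sets in auto)
  also have "\<dots> \<le> (\<Sum>m. emeasure (tree_space p) (U m))"
    by (rule emeasure_subadditive_countably) (use U_sets in auto)
  also have "\<dots> \<le> (\<Sum>m. ennreal (exp (- (\<beta> * x / 2)) * r ^ m))"
    unfolding U_def r_def using emeasure_level_le[OF assms] by (intro suminf_le summableI)
  also have "\<dots> = ennreal (\<Sum>m. exp (- (\<beta> * x / 2)) * r ^ m)"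
    using \<open>0 < r\<close> \<open>r < 1\<close> by (intro suminf_ennreal2) (auto intro!: summable_mult summable_geometric)
  also have "(\<Sum>m. exp (- (\<beta> * x / 2)) * r ^ m) = exp (- (\<beta> * x / 2)) / (1 - r)"
  proof -
    have "(\<lambda>m. r ^ m) sums (1 / (1 - r))"
      using geometric_sums[of r] \<open>0 < r\<close> \<open>r < 1\<close> by simp
    from sums_mult[OF this, of "exp (- (\<beta> * x / 2))"] show ?thesis
      by (simp add: sums_iff)
  qed
  finally have "ennreal (measure (tree_space p) {\<omega> \<in> space (tree_space p). wh \<omega> t > ereal x})
      \<le> ennreal (exp (- (\<beta> * x / 2)) / (1 - r))"
    by (simp only: emeasure_eq_measure)
  then show ?thesis
    using \<open>r < 1\<close> unfolding r_def by (subst (asm) ennreal_le_iff) auto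
qed

lemma tendsto_exp_neg_linear_at_top:
  assumes "0 < k"
  shows "((\<lambda>t::real. exp (- (k * t))) \<longlongrightarrow> 0) at_top"
proof -
  have "filterlim (\<lambda>t::real. k * t) at_top at_top"
    by (rule filterlim_tendsto_pos_mult_at_top[OF tendsto_const assms filterlim_ident])
  then have "filterlim (\<lambda>t::real. - (k * t)) at_bot at_top"
    by (simp add: filterlim_uminus_at_bot)
  then show ?thesis
    by (rule filterlim_compose[OF exp_at_bot])
qed

lemma tendsto_measure_wh_gt:
  assumes "0 < c" "0 < \<delta>"
    and gap: "\<forall>\<rho>. 0 < \<rho> \<longrightarrow> c * \<rho> \<le> 1 \<longrightarrow> ln 2 + \<delta> \<le> \<gamma> (c * \<rho>) + Upsilon \<rho>"
    and tail: "\<forall>a\<in>{0..1}. \<forall>v. M0 \<le> length v \<longrightarrow>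
      weight_tail p a v \<le> exp (- real (length v) * (\<gamma> a - \<delta> / 2))"
  shows "((\<lambda>t. measure (tree_space p) {\<omega> \<in> space (tree_space p). wh \<omega> t > ereal (c * t)})
    \<longlongrightarrow> 0) at_top"
proof (rule tendsto_sandwich[of "\<lambda>_. 0" _ _ "\<lambda>t. exp (- (\<delta> * c / 4 * t)) / (1 - exp (- \<delta> / 4))"])
  have bound: "measure (tree_space p) {\<omega> \<in> space (tree_space p). wh \<omega> t > ereal (c * t)}
      \<le> exp (- (\<delta> * c / 4 * t)) / (1 - exp (- \<delta> / 4))" if "max 0 (real M0 / c) < t" for t
  proof -
    have "0 < t" "real M0 / c < t" using that by auto
    then have "real M0 \<le> c * t" using \<open>0 < c\<close> by (simp add: field_simps)
    have "emeasure (tree_space p) {\<omega>\<in>space (tree_space p). birth \<omega> v \<le> t \<and> Wv \<omega> v > c * t}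
        \<le> ennreal (exp (- real (length v) * (ln 2 + \<delta> / 2)))" if "c * t < real (length v)" for v
      using emeasure_birth_le_Wv_gt_le[OF gap tail \<open>0 < c\<close> \<open>0 < t\<close>, of v] that \<open>real M0 \<le> c * t\<close>
      by (simp add: algebra_simps)
    from measure_wh_gt_le[of "\<delta> / 2", OF _ this] \<open>0 < \<delta>\<close> show ?thesis
      by (simp add: algebra_simps)
  qed
  show "\<forall>\<^sub>F t in at_top. measure (tree_space p) {\<omega> \<in> space (tree_space p). wh \<omega> t > ereal (c * t)}
      \<le> exp (- (\<delta> * c / 4 * t)) / (1 - exp (- \<delta> / 4))"
    using eventually_gt_at_top[of "max 0 (real M0 / c)"] by (rule eventually_mono) (rule bound)
  show "((\<lambda>t. exp (- (\<delta> * c / 4 * t)) / (1 - exp (- \<delta> / 4))) \<longlongrightarrow> 0) at_top"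
    using tendsto_exp_neg_linear_at_top[of "\<delta> * c / 4"] assms(1,2) by (intro tendsto_divide_zero) auto
qed simp_all

theorem lemma18:
  fixes p :: real and \<gamma> :: "real \<Rightarrow> real"
  assumes p: "0 < p" "p < 1"
    and cont: "continuous_on {0..1} \<gamma>"
    and nonneg: "\<forall>a\<in>{0..1}. \<gamma> a \<ge> 0"
    and bound: "\<forall>a\<in>{0..1}. \<exists>g :: nat \<Rightarrow> real. g \<in> o(\<lambda>m. real m) \<and>
        (\<forall>v :: vertex. prob_space.prob (tree_space p)
             {\<omega> \<in> space (tree_space p). path_weight \<omega> v > a * real (length v)}
           \<le> exp (- real (length v) * \<gamma> a + g (length v)))"
  shows "\<forall>\<epsilon>>0. ((\<lambda>t. prob_space.prob (tree_space p)
            {\<omega> \<in> space (tree_space p). wh \<omega> t > ereal (theta \<gamma> * (1 + \<epsilon>) * t)})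
          \<longlongrightarrow> 0) at_top"
proof (intro allI impI)
  fix \<epsilon> :: real assume "0 < \<epsilon>"
  have tail_bound: "\<forall>a\<in>{0..1}. \<exists>g :: nat \<Rightarrow> real. g \<in> o(\<lambda>m. real m) \<and>
      (\<forall>v. weight_tail p a v \<le> exp (- real (length v) * \<gamma> a + g (length v)))"
    using bound unfolding weight_tail_def .
  then have "\<gamma> 0 < ln 2"
    using gamma_zero_less_ln_2 by force
  then have "0 < theta \<gamma>"
    by (rule theta_pos[OF cont nonneg])
  define c where "c = theta \<gamma> * (1 + \<epsilon>)"
  have "theta \<gamma> < c" "0 < c"
    using \<open>0 < theta \<gamma>\<close> \<open>0 < \<epsilon>\<close> by (simp_all add: c_def)
  obtain \<delta> where "0 < \<delta>"
    and gap: "\<forall>\<rho>. 0 < \<rho> \<longrightarrow> c * \<rho> \<le> 1 \<longrightarrow> ln 2 + \<delta> \<le> \<gamma> (c * \<rho>) + Upsilon \<rho>"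
    using gamma_Upsilon_gap[OF cont nonneg \<open>theta \<gamma> < c\<close> \<open>0 < c\<close>] by blast
  obtain M0 where "\<forall>a\<in>{0..1}. \<forall>v. M0 \<le> length v \<longrightarrow>
      weight_tail p a v \<le> exp (- real (length v) * (\<gamma> a - \<delta> / 2))"
    using uniform_weight_tail_bound[OF cont tail_bound, of "\<delta> / 2"] \<open>0 < \<delta>\<close> by auto
  from tendsto_measure_wh_gt[OF \<open>0 < c\<close> \<open>0 < \<delta>\<close> gap this]
  show "((\<lambda>t. prob_space.prob (tree_space p)
      {\<omega> \<in> space (tree_space p). wh \<omega> t > ereal (theta \<gamma> * (1 + \<epsilon>) * t)}) \<longlongrightarrow> 0) at_top"
    by (simp add: c_def)
qed

end
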